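(* For all $m>n\ge1$, the cost-SR calculus has a proof of $\mathrm{cost}(\mathrm{BPHP}^m_n)=m-n$ of size polynomial in $m$ and $n$.
   Context: $\mathrm{BPHP}^m_n$ is the CNF with variables $p_{i,j}$ ($i\in[m]$, $j\in[n]$) and blocking variables $b_i$ ($i\in[m]$) and $b_{i,k,j}$ ($1\le i<k\le m$, $j\in[n]$), consisting of the clauses $\bigvee_{j\in[n]}p_{i,j}\lor b_i$ for $i\in[m]$ and $\lnot p_{i,j}\lor\lnot p_{k,j}\lor b_{i,k,j}$ for $1\le i<k\le m$, $j\in[n]$. Notation: a substitution maps variables to $0$, $1$ or literals (with $\sigma(\lnot x)=\lnot\sigma(x)$); $(\sigma\circ\tau)(x)=\sigma(\tau(x))$; total assignments assign Boolean values to all variables. $C{\upharpoonright}_\sigma$: apply $\sigma$ to the literals and simplify; $\Gamma{\upharpoonright}_\sigma$ is the multiset of $C{\upharpoonright}_\sigma\ne1$, $C\in\Gamma$. $\lnot C$ is the partial assignment falsifying all literals of $C$. $\Gamma\vdash_1 C$ means unit propagation on $\Gamma{\upharpoonright}_{\lnot C}$ derives the empty clause; $\Gamma\vdash_1\Delta$ means this for all $D\in\Delta$. $\mathrm{cost}(\alpha)$ is the number of blocking variables set to $1$ by a total assignment $\alpha$; $\mathrm{cost}(\Gamma)=\min\{\mathrm{cost}(\alpha):\alpha\models\Gamma\}$. $C$ is cost-SR w.r.t. $\Gamma$ if there is a substitution $\sigma$ with (1) $\Gamma{\upharpoonright}_{\lnot C}\vdash_1(\Gamma\cup\{C\}){\upharpoonright}_\sigma$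 and (2) $\mathrm{cost}(\tau\circ\sigma)\le\mathrm{cost}(\tau)$ for all total $\tau\supseteq\lnot C$. A cost-SR calculus derivation from $\Gamma$: sequence $D_1,\dots,D_t$, each in $\Gamma$, or by weakening/resolution from earlier clauses, or cost-SR w.r.t. $\Gamma\cup\{D_1,\dots,D_{i-1}\}$ with $\mathrm{Var}(D_i)\subseteq\mathrm{Var}(\Gamma)$; its size is $t$. A proof of $\mathrm{cost}(\Gamma)=k$ is a derivation containing $k$ unit clauses $b$ for $k$ distinct blocking variables and the unit clauses $\lnot b'$ for all other blocking variables $b'$. *)

theory Defs
  imports Main
begin

datatype 'v lit = Pos 'v | Neg 'v

fun lit_var :: "'v lit \<Rightarrow> 'v" where
  "lit_var (Pos x) = x" | "lit_var (Neg x) = x"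

fun lit_neg :: "'v lit \<Rightarrow> 'v lit" where
  "lit_neg (Pos x) = Neg x" | "lit_neg (Neg x) = Pos x"

type_synonym 'v clause = "'v lit set"
type_synonym 'v cnf = "'v clause set"

text \<open>Image of a variable under a substitution: a constant (0/1) or a literal.\<close>
datatype 'v slit = Const bool | Lit "'v lit"

type_synonym 'v subst = "'v \<Rightarrow> 'v slit"

fun slit_neg :: "'v slit \<Rightarrow> 'v slit" where
  "slit_neg (Const b) = Const (\<not> b)" | "slit_neg (Lit l) = Lit (lit_neg l)"

fun subst_lit :: "'v subst \<Rightarrow> 'v lit \<Rightarrow> 'v slit" where
  "subst_lit \<sigma> (Pos x) = \<sigma> x" | "subst_lit \<sigma> (Neg x) = slit_neg (\<sigma> x)"

text \<open>Restriction of a clause: None means the clause became 1 (satisfied).\<close>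
definition clause_restrict :: "'v subst \<Rightarrow> 'v clause \<Rightarrow> 'v clause option" where
  "clause_restrict \<sigma> C =
     (if \<exists>l\<in>C. subst_lit \<sigma> l = Const True then None
      else Some {l'. \<exists>l\<in>C. subst_lit \<sigma> l = Lit l'})"

definition restrict :: "'v subst \<Rightarrow> 'v cnf \<Rightarrow> 'v cnf" where
  "restrict \<sigma> F = {D. \<exists>C\<in>F. clause_restrict \<sigma> C = Some D}"

definition vars :: "'v cnf \<Rightarrow> 'v set" where
  "vars F = {lit_var l | l C. C \<in> F \<and> l \<in> C}"

definition clause_vars :: "'v clause \<Rightarrow> 'v set" where
  "clause_vars C = lit_var ` C"

text \<open>The partial assignment falsifying all literals of C (identity elsewhere).\<close>
definition neg_clause :: "'v clause \<Rightarrow> 'v subst" where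
  "neg_clause C = (\<lambda>x. if Pos x \<in> C then Const False
                        else if Neg x \<in> C then Const True else Lit (Pos x))"

definition unit_subst :: "'v lit \<Rightarrow> 'v subst" where
  "unit_subst l = (\<lambda>x. if x = lit_var l then Const (\<exists>y. l = Pos y) else Lit (Pos x))"

inductive up_refutes :: "'v cnf \<Rightarrow> bool" where
  empty: "{} \<in> F \<Longrightarrow> up_refutes F"
| unit: "{l} \<in> F \<Longrightarrow> up_refutes (restrict (unit_subst l) F) \<Longrightarrow> up_refutes F"

text \<open>Gamma |-_1 C : unit propagation on Gamma restricted by not C derives the empty clause.\<close>
definition up_implies :: "'v cnf \<Rightarrow> 'v clause \<Rightarrow> bool" where
  "up_implies \<Gamma> C = up_refutes (restrict (neg_clause C) \<Gamma>)"

definition up_implies_all :: "'v cnf \<Rightarrow> 'v cnf \<Rightarrow> bool" where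
  "up_implies_all \<Gamma> \<Delta> = (\<forall>D\<in>\<Delta>. up_implies \<Gamma> D)"

type_synonym 'v assignment = "'v \<Rightarrow> bool"

fun eval_lit :: "'v assignment \<Rightarrow> 'v lit \<Rightarrow> bool" where
  "eval_lit \<tau> (Pos x) = \<tau> x" | "eval_lit \<tau> (Neg x) = (\<not> \<tau> x)"

definition comp_subst :: "'v assignment \<Rightarrow> 'v subst \<Rightarrow> 'v assignment" where
  "comp_subst \<tau> \<sigma> = (\<lambda>x. case \<sigma> x of Const b \<Rightarrow> b | Lit l \<Rightarrow> eval_lit \<tau> l)"

definition cost :: "'v set \<Rightarrow> 'v assignment \<Rightarrow> nat" where
  "cost BV \<alpha> = card {b\<in>BV. \<alpha> b}"

definition extends_neg :: "'v assignment \<Rightarrow> 'v clause \<Rightarrow> bool" where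
  "extends_neg \<tau> C = (\<forall>l\<in>C. \<not> eval_lit \<tau> l)"

definition cost_SR :: "'v set \<Rightarrow> 'v cnf \<Rightarrow> 'v clause \<Rightarrow> bool" where
  "cost_SR BV \<Gamma> C = (\<exists>\<sigma>.
      up_implies_all (restrict (neg_clause C) \<Gamma>) (restrict \<sigma> (\<Gamma> \<union> {C})) \<and>
      (\<forall>\<tau>. extends_neg \<tau> C \<longrightarrow> cost BV (comp_subst \<tau> \<sigma>) \<le> cost BV \<tau>))"

definition valid_step :: "'v set \<Rightarrow> 'v cnf \<Rightarrow> 'v clause list \<Rightarrow> 'v clause \<Rightarrow> bool" where
  "valid_step BV \<Gamma> prev D =
     (D \<in> \<Gamma>
      \<or> (\<exists>C\<in>set prev. C \<subseteq> D)
      \<or> (\<exists>C1\<in>set prev. \<exists>C2\<in>set prev. \<exists>x. Pos x \<in> C1 \<and> Neg x \<in> C2 \<and>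
            D = (C1 - {Pos x}) \<union> (C2 - {Neg x}))
      \<or> (cost_SR BV (\<Gamma> \<union> set prev) D \<and> clause_vars D \<subseteq> vars \<Gamma>))"

definition derivation :: "'v set \<Rightarrow> 'v cnf \<Rightarrow> 'v clause list \<Rightarrow> bool" where
  "derivation BV \<Gamma> Ds = (\<forall>i<length Ds. valid_step BV \<Gamma> (take i Ds) (Ds ! i))"

text \<open>A proof of cost(Gamma) = k.\<close>
definition cost_proof :: "'v set \<Rightarrow> 'v cnf \<Rightarrow> nat \<Rightarrow> 'v clause list \<Rightarrow> bool" where
  "cost_proof BV \<Gamma> k Ds = (derivation BV \<Gamma> Ds \<and>
     (\<exists>K\<subseteq>BV. card K = k \<and> (\<forall>b\<in>K. {Pos b} \<in> set Ds) \<and>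
                         (\<forall>b\<in>BV - K. {Neg b} \<in> set Ds)))"

datatype bvar = p nat nat | b1 nat | b3 nat nat nat

definition BPHP_blocks :: "nat \<Rightarrow> nat \<Rightarrow> bvar set" where
  "BPHP_blocks m n = {b1 i | i. i \<in> {1..m}}
     \<union> {b3 i k j | i k j. 1 \<le> i \<and> i < k \<and> k \<le> m \<and> j \<in> {1..n}}"

definition BPHP :: "nat \<Rightarrow> nat \<Rightarrow> bvar cnf" where
  "BPHP m n =
     {insert (Pos (b1 i)) {Pos (p i j) | j. j \<in> {1..n}} | i. i \<in> {1..m}}
   \<union> {{Neg (p i j), Neg (p k j), Pos (b3 i k j)} | i k j.
        1 \<le> i \<and> i < k \<and> k \<le> m \<and> j \<in> {1..n}}"

end

theory Submission
  imports Defs "HOL-Combinatorics.Transposition"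
begin

text \<open>An optimal assignment puts pigeons \<open>1..n\<close> into holes \<open>1..n\<close> and blocks the
  remaining \<open>m - n\<close> pigeons. Cost-SR lets us impose this normal form by unit clauses, each
  witnessed by a substitution that turns any assignment into one of no larger cost: first no
  two pigeons share a hole (\<open>\<not>b3\<close>; pigeon \<open>k\<close> is blocked instead), then no pigeon
  \<open>k > j\<close> sits in hole \<open>j\<close> (swap pigeons \<open>j\<close> and \<open>k\<close>), then pigeon \<open>j \<le> n\<close> sits exactly
  in hole \<open>j\<close> and is unblocked. These \<open>O(m\<^sup>2 n)\<close> units leave, for each pigeon
  \<open>i > n\<close>, only its blocking literal after resolving its pigeon clause \<open>n\<close> times.\<close>

section \<open>Unit propagation under substitutions\<close>

lemma lit_neg_lit_neg [simp]: "lit_neg (lit_neg l) = l"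
  by (cases l) auto

definition subst_clause :: "'v subst \<Rightarrow> 'v clause \<Rightarrow> 'v clause" where
  "subst_clause \<sigma> C = {l'. \<exists>l\<in>C. subst_lit \<sigma> l = Lit l'}"

definition tautology :: "'v clause \<Rightarrow> bool" where
  "tautology C \<longleftrightarrow> (\<exists>l\<in>C. lit_neg l \<in> C)"

lemma not_tautology_singleton [simp]: "\<not> tautology {l}"
  by (cases l) (auto simp: tautology_def)

lemma clause_restrict_eq_Some:
  "clause_restrict \<sigma> C = Some D \<longleftrightarrow> (\<forall>l\<in>C. subst_lit \<sigma> l \<noteq> Const True) \<and> D = subst_clause \<sigma> C"
  unfolding clause_restrict_def subst_clause_def by auto

lemma subst_lit_neg_clause_singleton:
  "subst_lit (neg_clause {c}) l =
     (if l = c then Const False else if l = lit_neg c then Const True else Lit l)"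
  by (cases l; cases c) (auto simp: neg_clause_def)

lemma subst_lit_neg_clause_mem:
  "l \<in> D \<Longrightarrow> \<not> tautology D \<Longrightarrow> subst_lit (neg_clause D) l = Const False"
  by (cases l) (auto simp: neg_clause_def tautology_def)

lemma subst_lit_neg_clause_other:
  "l \<notin> D \<Longrightarrow> lit_neg l \<notin> D \<Longrightarrow> subst_lit (neg_clause D) l = Lit l"
  by (cases l) (auto simp: neg_clause_def)

lemma restrict_neg_singleton_memI:
  assumes "E \<in> \<Gamma>" "lit_neg c \<notin> E"
  shows "E - {c} \<in> restrict (neg_clause {c}) \<Gamma>"
proof -
  have "subst_lit (neg_clause {c}) l = (if l = c then Const False else Lit l)" if "l \<in> E" for l
    using that assms(2) by (auto simp: subst_lit_neg_clause_singleton)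
  then have "clause_restrict (neg_clause {c}) E = Some (E - {c})"
    unfolding clause_restrict_eq_Some subst_clause_def by auto
  then show ?thesis using assms(1) unfolding restrict_def by blast
qed

lemma up_refutes_complementary_units:
  assumes "{l} \<in> F" "{lit_neg l} \<in> F"
  shows "up_refutes F"
proof (rule up_refutes.unit[OF assms(1)])
  have "clause_restrict (unit_subst l) {lit_neg l} = Some {}"
    by (cases l) (auto simp: clause_restrict_def unit_subst_def)
  then show "up_refutes (restrict (unit_subst l) F)"
    using assms(2) by (intro up_refutes.empty) (auto simp: restrict_def)
qed

lemma up_implies_subsumed:
  assumes "E \<in> \<Gamma>" "lit_neg c \<notin> E" "E - {c} \<subseteq> D" "\<not> tautology D"
  shows "up_implies (restrict (neg_clause {c}) \<Gamma>) D"
proof -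
  have "clause_restrict (neg_clause D) (E - {c}) = Some {}"
    using assms(3,4) unfolding clause_restrict_eq_Some subst_clause_def
    by (auto simp: subst_lit_neg_clause_mem)
  then have "{} \<in> restrict (neg_clause D) (restrict (neg_clause {c}) \<Gamma>)"
    using restrict_neg_singleton_memI[OF assms(1,2)] unfolding restrict_def by blast
  then show ?thesis unfolding up_implies_def by (rule up_refutes.empty)
qed

text \<open>Under \<open>\<not>c\<close> and \<open>\<not>D\<close>, the clause \<open>E\<close> shrinks to the unit \<open>a\<close>
  while \<open>{\<not>a, c}\<close> shrinks to \<open>\<not>a\<close>.\<close>
lemma up_implies_unit_conflict:
  assumes "E \<in> \<Gamma>" "{lit_neg a, c} \<in> \<Gamma>" "lit_neg c \<notin> E" "a \<in> E" "a \<noteq> c" "a \<noteq> lit_neg c"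
    and "E - {c, a} \<subseteq> D" "a \<notin> D" "lit_neg a \<notin> D" "\<not> tautology D"
  shows "up_implies (restrict (neg_clause {c}) \<Gamma>) D"
proof -
  let ?\<Gamma>c = "restrict (neg_clause {c}) \<Gamma>"
  have "lit_neg c \<noteq> lit_neg a" "lit_neg c \<noteq> c" using assms(5) by (cases a; cases c; simp)+
  then have "{lit_neg a, c} - {c} \<in> ?\<Gamma>c" and "E - {c} \<in> ?\<Gamma>c"
    using restrict_neg_singleton_memI assms(1-3) by auto
  moreover have "{lit_neg a, c} - {c} = {lit_neg a}"
    using assms(6) by (cases a; cases c) auto
  moreover have "clause_restrict (neg_clause D) (E - {c}) = Some {a}"
  proof -
    have "subst_lit (neg_clause D) l = (if l = a then Lit a else Const False)"
      if "l \<in> E - {c}" for l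
      using that assms(7-10) by (auto simp: subst_lit_neg_clause_mem subst_lit_neg_clause_other)
    then show ?thesis
      using assms(4,5) unfolding clause_restrict_eq_Some subst_clause_def by force
  qed
  moreover have "clause_restrict (neg_clause D) {lit_neg a} = Some {lit_neg a}"
    using assms(8,9) unfolding clause_restrict_eq_Some subst_clause_def
    by (auto simp: subst_lit_neg_clause_other)
  ultimately have "{a} \<in> restrict (neg_clause D) ?\<Gamma>c" "{lit_neg a} \<in> restrict (neg_clause D) ?\<Gamma>c"
    unfolding restrict_def by force+
  then show ?thesis unfolding up_implies_def by (rule up_refutes_complementary_units)
qed

section \<open>Cost-SR for unit clauses\<close>

definition partial_renaming :: "'v subst \<Rightarrow> bool" where
  "partial_renaming \<sigma> \<longleftrightarrow>
     (\<forall>x. (\<exists>b. \<sigma> x = Const b) \<or> (\<exists>y. \<sigma> x = Lit (Pos y))) \<and>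
     (\<forall>x x' y. \<sigma> x = Lit (Pos y) \<longrightarrow> \<sigma> x' = Lit (Pos y) \<longrightarrow> x = x')"

lemma subst_lit_eq_LitD:
  assumes "partial_renaming \<sigma>" "subst_lit \<sigma> l = Lit l'"
  shows "\<exists>x y. \<sigma> x = Lit (Pos y) \<and> (l = Pos x \<and> l' = Pos y \<or> l = Neg x \<and> l' = Neg y)"
proof -
  have "(\<exists>b. \<sigma> (lit_var l) = Const b) \<or> (\<exists>y. \<sigma> (lit_var l) = Lit (Pos y))"
    using assms(1) unfolding partial_renaming_def by blast
  then show ?thesis using assms(2) by (cases l) auto
qed

lemma not_tautology_subst_clause:
  assumes "partial_renaming \<sigma>" "\<not> tautology C"
  shows "\<not> tautology (subst_clause \<sigma> C)"
proof
  assume "tautology (subst_clause \<sigma> C)"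
  then obtain l l0 l1
    where l: "l0 \<in> C" "subst_lit \<sigma> l0 = Lit l" "l1 \<in> C" "subst_lit \<sigma> l1 = Lit (lit_neg l)"
    unfolding tautology_def subst_clause_def by blast
  from subst_lit_eq_LitD[OF assms(1) l(2)] subst_lit_eq_LitD[OF assms(1) l(4)]
  obtain x x' y where "Pos x \<in> C" "Neg x' \<in> C" "\<sigma> x = Lit (Pos y)" "\<sigma> x' = Lit (Pos y)"
    using l(1,3) by (cases l) auto
  moreover from this have "x = x'" using assms(1) unfolding partial_renaming_def by blast
  ultimately show False using assms(2) unfolding tautology_def by force
qed

definition reduct_implied :: "'v subst \<Rightarrow> 'v lit \<Rightarrow> 'v cnf \<Rightarrow> 'v clause \<Rightarrow> bool" where
  "reduct_implied \<sigma> c \<Gamma> E \<longleftrightarrow>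
     (\<exists>l\<in>E. subst_lit \<sigma> l = Const True) \<or>
     up_implies (restrict (neg_clause {c}) \<Gamma>) (subst_clause \<sigma> E)"

lemma cost_SR_unitI:
  assumes "subst_lit \<sigma> c = Const True"
    and "\<And>E. E \<in> \<Gamma> \<Longrightarrow> reduct_implied \<sigma> c \<Gamma> E"
    and "\<And>\<tau>. extends_neg \<tau> {c} \<Longrightarrow> cost BV (comp_subst \<tau> \<sigma>) \<le> cost BV \<tau>"
  shows "cost_SR BV \<Gamma> {c}"
  unfolding cost_SR_def
proof (intro exI conjI allI impI)
  show "up_implies_all (restrict (neg_clause {c}) \<Gamma>) (restrict \<sigma> (\<Gamma> \<union> {{c}}))"
    unfolding up_implies_all_def
  proof
    fix D assume "D \<in> restrict \<sigma> (\<Gamma> \<union> {{c}})"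
    then obtain E where E: "E \<in> \<Gamma> \<union> {{c}}" "clause_restrict \<sigma> E = Some D"
      unfolding restrict_def by blast
    then have sat: "\<forall>l\<in>E. subst_lit \<sigma> l \<noteq> Const True" and D: "D = subst_clause \<sigma> E"
      unfolding clause_restrict_eq_Some by auto
    then have "E \<in> \<Gamma>" using E(1) assms(1) by auto
    then show "up_implies (restrict (neg_clause {c}) \<Gamma>) D"
      using assms(2) sat D unfolding reduct_implied_def by blast
  qed
qed (rule assms(3))

lemma reduct_implied_satisfied: "l \<in> E \<Longrightarrow> subst_lit \<sigma> l = Const True \<Longrightarrow> reduct_implied \<sigma> c \<Gamma> E"
  unfolding reduct_implied_def by blast

lemma reduct_implied_subsumed:
  assumes "E' \<in> \<Gamma>" "lit_neg c \<notin> E'" "E' - {c} \<subseteq> subst_clause \<sigma> E"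
    and "partial_renaming \<sigma>" "\<not> tautology E"
  shows "reduct_implied \<sigma> c \<Gamma> E"
  unfolding reduct_implied_def
  using up_implies_subsumed[OF assms(1-3) not_tautology_subst_clause[OF assms(4,5)]] by (rule disjI2)

lemma reduct_implied_unit_conflict:
  assumes "E' \<in> \<Gamma>" "{lit_neg a, c} \<in> \<Gamma>" "lit_neg c \<notin> E'" "a \<in> E'" "a \<noteq> c" "a \<noteq> lit_neg c"
    and "E' - {c, a} \<subseteq> subst_clause \<sigma> E" "a \<notin> subst_clause \<sigma> E" "lit_neg a \<notin> subst_clause \<sigma> E"
    and "partial_renaming \<sigma>" "\<not> tautology E"
  shows "reduct_implied \<sigma> c \<Gamma> E"
  unfolding reduct_implied_def
  using up_implies_unit_conflict[OF assms(1-9) not_tautology_subst_clause[OF assms(10,11)]]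
  by (rule disjI2)

lemma subst_clause_fixed:
  assumes "\<forall>x\<in>clause_vars C. \<sigma> x = Lit (Pos x)"
  shows "subst_clause \<sigma> C = C"
proof -
  have "subst_lit \<sigma> l = Lit l" if "l \<in> C" for l
  proof -
    have "\<sigma> (lit_var l) = Lit (Pos (lit_var l))"
      using assms that unfolding clause_vars_def by blast
    then show ?thesis by (cases l) auto
  qed
  then show ?thesis unfolding subst_clause_def by auto
qed

lemma Pos_mem_subst_clauseI: "Pos x \<in> C \<Longrightarrow> \<sigma> x = Lit (Pos y) \<Longrightarrow> Pos y \<in> subst_clause \<sigma> C"
  unfolding subst_clause_def by force

lemma Neg_mem_subst_clauseI: "Neg x \<in> C \<Longrightarrow> \<sigma> x = Lit (Pos y) \<Longrightarrow> Neg y \<in> subst_clause \<sigma> C"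
  unfolding subst_clause_def by force

lemma reduct_implied_fixed:
  assumes "E \<in> \<Gamma>" "\<forall>x\<in>clause_vars E. \<sigma> x = Lit (Pos x)" "subst_lit \<sigma> c = Const True"
    and "\<not> tautology E"
  shows "reduct_implied \<sigma> c \<Gamma> E"
proof -
  have "lit_neg c \<notin> E"
  proof
    assume "lit_neg c \<in> E"
    then have "lit_var c \<in> clause_vars E"
      unfolding clause_vars_def by (cases c) force+
    then have "\<sigma> (lit_var c) = Lit (Pos (lit_var c))" using assms(2) by blast
    then show False using assms(3) by (cases c) auto
  qed
  then have "up_implies (restrict (neg_clause {c}) \<Gamma>) E"
    using up_implies_subsumed[OF assms(1)] assms(4) by blast
  then show ?thesis unfolding reduct_implied_def subst_clause_fixed[OF assms(2)] by blast
qed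

definition falsify_subst :: "'v \<Rightarrow> 'v subst" where
  "falsify_subst w v = (if v = w then Const False else Lit (Pos v))"

lemma partial_renaming_falsify_subst: "partial_renaming (falsify_subst w)"
  unfolding partial_renaming_def falsify_subst_def by auto

lemma reduct_implied_falsify:
  assumes "E \<in> \<Gamma>" "Neg w \<in> E \<or> w \<notin> clause_vars E" "\<not> tautology E"
  shows "reduct_implied (falsify_subst w) (Neg w) \<Gamma> E"
  using assms(2)
proof
  assume "Neg w \<in> E"
  then show ?thesis by (rule reduct_implied_satisfied) (simp add: falsify_subst_def)
next
  assume "w \<notin> clause_vars E"
  then show ?thesis using assms(1,3)
    by (intro reduct_implied_fixed) (auto simp: falsify_subst_def)
qed

lemma cost_mono:
  assumes "finite BV" "\<And>b. b \<in> BV \<Longrightarrow> \<alpha> b \<Longrightarrow> \<tau> b"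
  shows "cost BV \<alpha> \<le> cost BV \<tau>"
  unfolding cost_def by (rule card_mono) (use assms in auto)

lemma cost_le_inj:
  assumes "finite BV" "inj_on f {b\<in>BV. \<alpha> b}" "f ` {b\<in>BV. \<alpha> b} \<subseteq> {b\<in>BV. \<tau> b}"
  shows "cost BV \<alpha> \<le> cost BV \<tau>"
  unfolding cost_def by (rule card_inj_on_le) (use assms in auto)

lemma cost_le_exchange:
  assumes "finite BV" "{b\<in>BV. \<alpha> b} \<subseteq> insert b_in ({b\<in>BV. \<tau> b} - {b_out})" "b_out \<in> BV" "\<tau> b_out"
  shows "cost BV \<alpha> \<le> cost BV \<tau>"
proof -
  let ?S = "{b\<in>BV. \<tau> b}"
  have "cost BV \<alpha> \<le> card (insert b_in (?S - {b_out}))"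
    unfolding cost_def by (rule card_mono) (use assms(1,2) in auto)
  also have "\<dots> \<le> Suc (card (?S - {b_out}))" using assms(1) by (simp add: card_insert_if)
  also have "\<dots> = card ?S" by (rule card_Suc_Diff1) (use assms in auto)
  finally show ?thesis unfolding cost_def .
qed

lemma cost_falsify_subst_le: "finite BV \<Longrightarrow> cost BV (comp_subst \<tau> (falsify_subst w)) \<le> cost BV \<tau>"
  by (rule cost_mono) (auto simp: comp_subst_def falsify_subst_def split: if_splits)

lemma valid_step_axiom: "D \<in> \<Gamma> \<Longrightarrow> valid_step BV \<Gamma> prev D"
  unfolding valid_step_def by blast

lemma valid_step_resolution:
  "C1 \<in> set prev \<Longrightarrow> C2 \<in> set prev \<Longrightarrow> Pos x \<in> C1 \<Longrightarrow> Neg x \<in> C2 \<Longrightarrow>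
   D = (C1 - {Pos x}) \<union> (C2 - {Neg x}) \<Longrightarrow> valid_step BV \<Gamma> prev D"
  unfolding valid_step_def by blast

lemma valid_step_cost_SR:
  "cost_SR BV (\<Gamma> \<union> set prev) D \<Longrightarrow> clause_vars D \<subseteq> vars \<Gamma> \<Longrightarrow> valid_step BV \<Gamma> prev D"
  unfolding valid_step_def by blast

lemma derivation_Nil [simp]: "derivation BV \<Gamma> []"
  unfolding derivation_def by simp

lemma derivation_appendI:
  assumes "derivation BV \<Gamma> xs"
    and "\<And>ps D rs. ys = ps @ D # rs \<Longrightarrow> valid_step BV \<Gamma> (xs @ ps) D"
  shows "derivation BV \<Gamma> (xs @ ys)"
  unfolding derivation_def
proof (intro allI impI)
  fix i assume i: "i < length (xs @ ys)"
  show "valid_step BV \<Gamma> (take i (xs @ ys)) ((xs @ ys) ! i)"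
  proof (cases "i < length xs")
    case True
    then show ?thesis using assms(1) unfolding derivation_def by (simp add: nth_append)
  next
    case False
    define r where "r = i - length xs"
    have r: "r < length ys" "i = length xs + r" using i False unfolding r_def by auto
    have "ys = take r ys @ ys ! r # drop (Suc r) ys" using r(1) by (simp add: id_take_nth_drop)
    then have "valid_step BV \<Gamma> (xs @ take r ys) (ys ! r)" by (rule assms(2))
    then show ?thesis using r by (simp add: nth_append)
  qed
qed

lemma derivation_snocI:
  "derivation BV \<Gamma> xs \<Longrightarrow> valid_step BV \<Gamma> xs D \<Longrightarrow> derivation BV \<Gamma> (xs @ [D])"
  by (rule derivation_appendI) (auto simp: Cons_eq_append_conv)

lemma derivation_append_setI:
  assumes "derivation BV \<Gamma> xs"
    and "\<And>ps D. D \<in> set ys \<Longrightarrow> set ps \<subseteq> set ys \<Longrightarrow> valid_step BV \<Gamma> (xs @ ps) D"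
  shows "derivation BV \<Gamma> (xs @ ys)"
  by (rule derivation_appendI[OF assms(1)]) (rule assms(2); auto)

lemma derivation_append_map_upt:
  assumes "derivation BV \<Gamma> xs"
    and "\<And>k. a \<le> k \<Longrightarrow> k < b \<Longrightarrow> valid_step BV \<Gamma> (xs @ map f [a..<k]) (f k)"
  shows "derivation BV \<Gamma> (xs @ map f [a..<b])"
  using assms(2)
proof (induction b)
  case (Suc b)
  then have "derivation BV \<Gamma> (xs @ map f [a..<b])" by simp
  with Suc.prems[of b] show ?case by (cases "a \<le> b") (auto dest: derivation_snocI)
qed (simp add: assms(1))

lemma derivation_append_concat_upt:
  assumes "derivation BV \<Gamma> xs"
    and "\<And>j. a \<le> j \<Longrightarrow> j < b \<Longrightarrow> derivation BV \<Gamma> (xs @ concat (map g [a..<j])) \<Longrightarrow>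
               derivation BV \<Gamma> (xs @ concat (map g [a..<j]) @ g j)"
  shows "derivation BV \<Gamma> (xs @ concat (map g [a..<b]))"
  using assms(2)
proof (induction b)
  case (Suc b)
  then have "derivation BV \<Gamma> (xs @ concat (map g [a..<b]))" by simp
  with Suc.prems[of b] show ?case by (cases "a \<le> b") auto
qed (simp add: assms(1))

definition pigeon_clause :: "nat \<Rightarrow> nat \<Rightarrow> bvar clause" where
  "pigeon_clause n i = insert (Pos (b1 i)) {Pos (p i j) | j. j \<in> {1..n}}"

definition hole_clause :: "nat \<Rightarrow> nat \<Rightarrow> nat \<Rightarrow> bvar clause" where
  "hole_clause i k j = {Neg (p i j), Neg (p k j), Pos (b3 i k j)}"

definition strict_hole_clause :: "nat \<Rightarrow> nat \<Rightarrow> nat \<Rightarrow> bvar clause" where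
  "strict_hole_clause i k j = {Neg (p i j), Neg (p k j)}"

definition collision :: "nat \<Rightarrow> nat \<Rightarrow> nat \<Rightarrow> nat \<Rightarrow> nat \<Rightarrow> bool" where
  "collision m n i k j \<longleftrightarrow> 1 \<le> i \<and> i < k \<and> k \<le> m \<and> 1 \<le> j \<and> j \<le> n"

lemma BPHP_eq:
  "BPHP m n =
     {pigeon_clause n i | i. 1 \<le> i \<and> i \<le> m} \<union> {hole_clause i k j | i k j. collision m n i k j}"
  unfolding BPHP_def pigeon_clause_def hole_clause_def collision_def by auto

lemma BPHP_memE:
  assumes "E \<in> BPHP m n"
  obtains i where "E = pigeon_clause n i" "1 \<le> i" "i \<le> m"
    | i k j where "E = hole_clause i k j" "collision m n i k j"
  using assms unfolding BPHP_eq by blast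

lemma pigeon_clause_mem_BPHP: "1 \<le> i \<Longrightarrow> i \<le> m \<Longrightarrow> pigeon_clause n i \<in> BPHP m n"
  unfolding BPHP_eq by blast

lemma hole_clause_mem_BPHP: "collision m n i k j \<Longrightarrow> hole_clause i k j \<in> BPHP m n"
  unfolding BPHP_eq by blast

lemma BPHP_blocks_eq:
  "BPHP_blocks m n = {b1 i | i. 1 \<le> i \<and> i \<le> m} \<union> {b3 i k j | i k j. collision m n i k j}"
  unfolding BPHP_blocks_def collision_def by auto

lemma p_notin_BPHP_blocks [simp]: "p x h \<notin> BPHP_blocks m n"
  unfolding BPHP_blocks_def by auto

lemma finite_BPHP_blocks: "finite (BPHP_blocks m n)"
proof -
  have "BPHP_blocks m n \<subseteq> b1 ` {..m} \<union> (\<lambda>(i, k, j). b3 i k j) ` ({..m} \<times> {..m} \<times> {..n})"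
    unfolding BPHP_blocks_def by (fastforce simp: image_iff)
  then show ?thesis by (rule finite_subset) auto
qed

lemma not_tautology_pigeon_clause [simp]: "\<not> tautology (pigeon_clause n i)"
  unfolding tautology_def pigeon_clause_def by auto

lemma not_tautology_hole_clause [simp]: "\<not> tautology (hole_clause i k j)"
  unfolding tautology_def hole_clause_def by auto

lemma not_tautology_strict_hole_clause [simp]: "\<not> tautology (strict_hole_clause i k j)"
  unfolding tautology_def strict_hole_clause_def by auto

lemma strict_hole_clause_commute: "strict_hole_clause i k j = strict_hole_clause k i j"
  unfolding strict_hole_clause_def by auto

lemma clause_vars_pigeon_clause:
  "clause_vars (pigeon_clause n i) = insert (b1 i) {p i j | j. 1 \<le> j \<and> j \<le> n}"
  unfolding clause_vars_def pigeon_clause_def by (auto intro: rev_image_eqI)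

lemma clause_vars_hole_clause [simp]: "clause_vars (hole_clause i k j) = {p i j, p k j, b3 i k j}"
  unfolding clause_vars_def hole_clause_def by auto

lemma clause_vars_strict_hole_clause [simp]:
  "clause_vars (strict_hole_clause i k j) = {p i j, p k j}"
  unfolding clause_vars_def strict_hole_clause_def by auto

lemma clause_vars_singleton [simp]: "clause_vars {l} = {lit_var l}"
  unfolding clause_vars_def by simp

lemma mem_varsI: "C \<in> F \<Longrightarrow> x \<in> clause_vars C \<Longrightarrow> x \<in> vars F"
  unfolding vars_def clause_vars_def by blast

lemma p_mem_vars_BPHP: "1 \<le> i \<Longrightarrow> i \<le> m \<Longrightarrow> 1 \<le> j \<Longrightarrow> j \<le> n \<Longrightarrow> p i j \<in> vars (BPHP m n)"
  by (rule mem_varsI[OF pigeon_clause_mem_BPHP]) (auto simp: clause_vars_pigeon_clause)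

lemma b1_mem_vars_BPHP: "1 \<le> i \<Longrightarrow> i \<le> m \<Longrightarrow> b1 i \<in> vars (BPHP m n)"
  by (rule mem_varsI[OF pigeon_clause_mem_BPHP]) (auto simp: clause_vars_pigeon_clause)

lemma b3_mem_vars_BPHP: "collision m n i k j \<Longrightarrow> b3 i k j \<in> vars (BPHP m n)"
  by (rule mem_varsI[OF hole_clause_mem_BPHP]) auto

section \<open>Redundant unit clauses\<close>

text \<open>Rather than paying for pigeons \<open>i\<close> and \<open>k\<close> both sitting in hole \<open>j\<close>, pigeon \<open>k\<close>
  leaves all holes and pays with its own blocking variable.\<close>
definition unblock_subst :: "nat \<Rightarrow> nat \<Rightarrow> nat \<Rightarrow> bvar subst" where
  "unblock_subst i k j v =
     (if v = b3 i k j then Const False else if v = b1 k then Const True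
      else if v = p k j then Const False else Lit (Pos v))"

lemma unblock_subst_other:
  "v \<notin> {b3 i k j, b1 k, p k j} \<Longrightarrow> unblock_subst i k j v = Lit (Pos v)"
  by (simp add: unblock_subst_def)

lemma cost_unblock_subst_le:
  assumes "collision m n i k j" "\<tau> (b3 i k j)"
  shows "cost (BPHP_blocks m n) (comp_subst \<tau> (unblock_subst i k j)) \<le> cost (BPHP_blocks m n) \<tau>"
proof (rule cost_le_exchange[where b_out = "b3 i k j" and b_in = "b1 k"])
  show "finite (BPHP_blocks m n)" by (rule finite_BPHP_blocks)
  show "\<tau> (b3 i k j)" by (rule assms(2))
  show "b3 i k j \<in> BPHP_blocks m n" using assms(1) unfolding BPHP_blocks_eq by blast
  show "{b \<in> BPHP_blocks m n. comp_subst \<tau> (unblock_subst i k j) b}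
      \<subseteq> insert (b1 k) ({b \<in> BPHP_blocks m n. \<tau> b} - {b3 i k j})"
    by (auto simp: comp_subst_def unblock_subst_def split: if_splits)
qed

lemma cost_SR_unblock:
  assumes ikj: "collision m n i k j"
    and P: "P \<subseteq> {{Neg (b3 x y h)} | x y h. collision m n x y h}"
  shows "cost_SR (BPHP_blocks m n) (BPHP m n \<union> P) {Neg (b3 i k j)}"
proof (rule cost_SR_unitI)
  let ?\<sigma> = "unblock_subst i k j"
  show c: "subst_lit ?\<sigma> (Neg (b3 i k j)) = Const True" by (simp add: unblock_subst_def)
  fix E assume E: "E \<in> BPHP m n \<union> P"
  then consider (pigeon) x where "E = pigeon_clause n x"
    | (hole) x y h where "E = hole_clause x y h"
    | (unit) x y h where "E = {Neg (b3 x y h)}"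
    using P by (auto elim!: BPHP_memE)
  then show "reduct_implied ?\<sigma> (Neg (b3 i k j)) (BPHP m n \<union> P) E"
  proof cases
    case (pigeon x)
    show ?thesis
    proof (cases "x = k")
      case True
      then show ?thesis using pigeon
        by (intro reduct_implied_satisfied[of "Pos (b1 k)"])
           (auto simp: pigeon_clause_def unblock_subst_def)
    next
      case False
      then have "\<forall>v\<in>clause_vars E. ?\<sigma> v = Lit (Pos v)"
        using pigeon by (auto simp: clause_vars_pigeon_clause intro!: unblock_subst_other)
      then show ?thesis using pigeon E c by (intro reduct_implied_fixed) auto
    qed
  next
    case (hole x y h)
    show ?thesis
    proof (cases "h = j \<and> (x = k \<or> y = k)")
      case True
      then show ?thesis using hole
        by (intro reduct_implied_satisfied[of "Neg (p k j)"])
           (auto simp: hole_clause_def unblock_subst_def)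
    next
      case False
      then have "\<forall>v\<in>clause_vars E. ?\<sigma> v = Lit (Pos v)"
        using hole by (auto intro!: unblock_subst_other)
      then show ?thesis using hole E c by (intro reduct_implied_fixed) auto
    qed
  next
    case (unit x y h)
    show ?thesis
    proof (cases "b3 x y h = b3 i k j")
      case True
      then show ?thesis using unit c by (intro reduct_implied_satisfied) auto
    next
      case False
      then have "\<forall>v\<in>clause_vars E. ?\<sigma> v = Lit (Pos v)"
        using unit by (auto intro!: unblock_subst_other)
      then show ?thesis using unit E c by (intro reduct_implied_fixed) auto
    qed
  qed
next
  fix \<tau> :: "bvar assignment"
  assume "extends_neg \<tau> {Neg (b3 i k j)}"
  then have "\<tau> (b3 i k j)" unfolding extends_neg_def by simp
  with ikj show "cost (BPHP_blocks m n) (comp_subst \<tau> (unblock_subst i k j)) \<le> cost (BPHP_blocks m n) \<tau>"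
    by (rule cost_unblock_subst_le)
qed

text \<open>Swap pigeons \<open>j\<close> and \<open>k\<close>, then move pigeon \<open>j\<close> into hole \<open>j\<close>. All \<open>b3\<close> can be
  set to \<open>0\<close>: their negations and the strict hole clauses are derived before.\<close>
definition shift_subst :: "nat \<Rightarrow> nat \<Rightarrow> bvar subst" where
  "shift_subst j k v = (case v of
      p x h \<Rightarrow> if h = j \<and> x = k then Const False else if h = j \<and> x = j then Const True
               else Lit (Pos (p (Transposition.transpose j k x) h))
    | b1 x \<Rightarrow> Lit (Pos (b1 (Transposition.transpose j k x)))
    | b3 _ _ _ \<Rightarrow> Const False)"

lemma shift_subst_p:
  "\<not> (h = j \<and> (x = k \<or> x = j)) \<Longrightarrow>
   shift_subst j k (p x h) = Lit (Pos (p (Transposition.transpose j k x) h))"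
  unfolding shift_subst_def by auto

lemma partial_renaming_shift_subst: "partial_renaming (shift_subst j k)"
  unfolding partial_renaming_def
proof (intro conjI allI impI)
  fix v show "(\<exists>b. shift_subst j k v = Const b) \<or> (\<exists>y. shift_subst j k v = Lit (Pos y))"
    unfolding shift_subst_def by (cases v) auto
next
  fix v v' y assume "shift_subst j k v = Lit (Pos y)" "shift_subst j k v' = Lit (Pos y)"
  then show "v = v'"
    unfolding shift_subst_def
    by (cases v; cases v') (auto split: if_splits dest: transpose_eq_imp_eq)
qed

lemma subst_clause_shift_pigeon_clause:
  assumes "j \<noteq> k"
  shows "subst_clause (shift_subst j k) (pigeon_clause n k) =
    insert (Pos (b1 j)) {Pos (p j h) | h. h \<in> {1..n} \<and> h \<noteq> j}" (is "?L = ?R")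
proof
  show "?L \<subseteq> ?R"
    unfolding subst_clause_def pigeon_clause_def using assms
    by (auto simp: shift_subst_def split: if_splits)
next
  have "shift_subst j k (b1 k) = Lit (Pos (b1 j))" unfolding shift_subst_def by simp
  moreover have "shift_subst j k (p k h) = Lit (Pos (p j h))" if "h \<noteq> j" for h
    using that assms by (subst shift_subst_p) auto
  ultimately show "?R \<subseteq> ?L"
    unfolding subst_clause_def pigeon_clause_def by force
qed

context
  fixes m n j k :: nat and P :: "bvar cnf"
  assumes jk: "1 \<le> j" "j \<le> n" "j < k" "k \<le> m"
    and strict_mem: "\<And>x y h. collision m n x y h \<Longrightarrow> strict_hole_clause x y h \<in> P"
    and earlier_mem: "\<And>x h. 1 \<le> h \<Longrightarrow> h < j \<Longrightarrow> h < x \<Longrightarrow> x \<le> m \<Longrightarrow> {Neg (p x h)} \<in> P"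
begin

private abbreviation "\<sigma> \<equiv> shift_subst j k"
private abbreviation "t \<equiv> Transposition.transpose j k"

private lemma transpose_range: "1 \<le> x \<Longrightarrow> x \<le> m \<Longrightarrow> 1 \<le> t x \<and> t x \<le> m"
  using jk by (auto simp: transpose_def)

private lemma strict_hole_clause_mem:
  "a \<noteq> b \<Longrightarrow> 1 \<le> a \<Longrightarrow> a \<le> m \<Longrightarrow> 1 \<le> b \<Longrightarrow> b \<le> m \<Longrightarrow> 1 \<le> h \<Longrightarrow> h \<le> n \<Longrightarrow>
   strict_hole_clause a b h \<in> P"
  using strict_mem[of a b h] strict_mem[of b a h] strict_hole_clause_commute[of a b h]
  unfolding collision_def by (cases "a < b") auto

private lemma reduct_implied_shift_pigeon_clause:
  assumes x: "1 \<le> x" "x \<le> m"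
  shows "reduct_implied \<sigma> (Neg (p k j)) (BPHP m n \<union> P) (pigeon_clause n x)"
proof -
  consider "x = j" | "x = k" | "x \<noteq> j" "x \<noteq> k" by blast
  then show ?thesis
  proof cases
    case 1
    then show ?thesis using jk
      by (intro reduct_implied_satisfied[of "Pos (p j j)"])
         (auto simp: pigeon_clause_def shift_subst_def)
  next
    case 2
    have jk': "j \<noteq> k" using jk by simp
    have image: "subst_clause \<sigma> (pigeon_clause n x) =
        insert (Pos (b1 j)) {Pos (p j h) | h. h \<in> {1..n} \<and> h \<noteq> j}"
      using subst_clause_shift_pigeon_clause[OF jk'] 2 by simp
    show ?thesis
    proof (rule reduct_implied_unit_conflict[where E' = "pigeon_clause n j" and a = "Pos (p j j)"])
      show "pigeon_clause n j \<in> BPHP m n \<union> P" using pigeon_clause_mem_BPHP jk by auto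
      show "{lit_neg (Pos (p j j)), Neg (p k j)} \<in> BPHP m n \<union> P"
        using strict_mem[of j k j] jk unfolding collision_def strict_hole_clause_def by auto
      show "lit_neg (Neg (p k j)) \<notin> pigeon_clause n j" using jk' unfolding pigeon_clause_def by auto
      show "Pos (p j j) \<in> pigeon_clause n j" using jk unfolding pigeon_clause_def by auto
      show "pigeon_clause n j - {Neg (p k j), Pos (p j j)} \<subseteq> subst_clause \<sigma> (pigeon_clause n x)"
        unfolding image by (auto simp: pigeon_clause_def)
      show "Pos (p j j) \<notin> subst_clause \<sigma> (pigeon_clause n x)" unfolding image by auto
      show "lit_neg (Pos (p j j)) \<notin> subst_clause \<sigma> (pigeon_clause n x)" unfolding image by auto
    qed (use jk' in \<open>auto simp: partial_renaming_shift_subst\<close>)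
  next
    case 3
    then have "\<forall>v\<in>clause_vars (pigeon_clause n x). \<sigma> v = Lit (Pos v)"
      by (auto simp: clause_vars_pigeon_clause shift_subst_def)
    then show ?thesis using pigeon_clause_mem_BPHP[OF x]
      by (intro reduct_implied_fixed) (auto simp: shift_subst_def)
  qed
qed

private lemma reduct_implied_shift_hole:
  assumes xyh: "collision m n x y h"
    and E: "E = hole_clause x y h \<or> E = strict_hole_clause x y h" "E \<in> BPHP m n \<union> P"
  shows "reduct_implied \<sigma> (Neg (p k j)) (BPHP m n \<union> P) E"
proof -
  have lits: "Neg (p x h) \<in> E" "Neg (p y h) \<in> E"
    using E(1) unfolding hole_clause_def strict_hole_clause_def by auto
  have taut: "\<not> tautology E" using E(1) by auto
  have r: "1 \<le> x" "x < y" "y \<le> m" "1 \<le> h" "h \<le> n" using xyh unfolding collision_def by auto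
  consider (hits_k) "h = j" "x = k \<or> y = k"
    | (hits_j) "h = j" "x \<noteq> k" "y \<noteq> k" "x = j \<or> y = j"
    | (other) "\<not> (h = j \<and> (x = k \<or> x = j))" "\<not> (h = j \<and> (y = k \<or> y = j))"
    by blast
  then show ?thesis
  proof cases
    case hits_k
    then show ?thesis
      using lits by (intro reduct_implied_satisfied[of "Neg (p k j)"]) (auto simp: shift_subst_def)
  next
    case hits_j
    define z where "z = (if x = j then y else x)"
    have z: "z \<noteq> k" "z \<noteq> j" "1 \<le> z" "z \<le> m" "Neg (p z j) \<in> E"
      using hits_j r lits jk unfolding z_def by auto
    show ?thesis
    proof (rule reduct_implied_subsumed[where E' = "strict_hole_clause z k j"])
      show "strict_hole_clause z k j \<in> BPHP m n \<union> P" using strict_hole_clause_mem z jk by auto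
      show "lit_neg (Neg (p k j)) \<notin> strict_hole_clause z k j"
        unfolding strict_hole_clause_def by auto
      have "\<sigma> (p z j) = Lit (Pos (p z j))" using z by (subst shift_subst_p) auto
      with z(5) have "Neg (p z j) \<in> subst_clause \<sigma> E" by (rule Neg_mem_subst_clauseI)
      then show "strict_hole_clause z k j - {Neg (p k j)} \<subseteq> subst_clause \<sigma> E"
        unfolding strict_hole_clause_def by auto
    qed (use taut in \<open>auto simp: partial_renaming_shift_subst\<close>)
  next
    case other
    have "\<sigma> (p x h) = Lit (Pos (p (t x) h))" "\<sigma> (p y h) = Lit (Pos (p (t y) h))"
      using other by (simp_all add: shift_subst_p)
    then have "Neg (p (t x) h) \<in> subst_clause \<sigma> E" "Neg (p (t y) h) \<in> subst_clause \<sigma> E"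
      using lits by (auto intro: Neg_mem_subst_clauseI)
    moreover have "t x \<noteq> t y" using r by (auto dest: transpose_eq_imp_eq)
    then have "strict_hole_clause (t x) (t y) h \<in> P"
      using strict_hole_clause_mem transpose_range r by simp
    ultimately show ?thesis
      using taut partial_renaming_shift_subst
      by (intro reduct_implied_subsumed[where E' = "strict_hole_clause (t x) (t y) h"])
         (auto simp: strict_hole_clause_def)
  qed
qed

private lemma reduct_implied_shift_unit:
  assumes x: "{Neg (p x h)} \<in> BPHP m n \<union> P" "1 \<le> h" "h \<le> j" "h < x" "x \<le> m"
  shows "reduct_implied \<sigma> (Neg (p k j)) (BPHP m n \<union> P) {Neg (p x h)}"
proof -
  consider "h = j" "x = k" | "h = j" "x \<noteq> k" | "h < j" using x by linarith
  then show ?thesis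
  proof cases
    case 1
    then show ?thesis
      by (intro reduct_implied_satisfied[of "Neg (p k j)"]) (auto simp: shift_subst_def)
  next
    case 2
    then have "\<sigma> (p x h) = Lit (Pos (p x h))" using x by (subst shift_subst_p) auto
    then show ?thesis using 2 x by (intro reduct_implied_fixed) (auto simp: shift_subst_def)
  next
    case 3
    have "\<sigma> (p x h) = Lit (Pos (p (t x) h))" using 3 by (intro shift_subst_p) auto
    then have "Neg (p (t x) h) \<in> subst_clause \<sigma> {Neg (p x h)}" by (intro Neg_mem_subst_clauseI) auto
    moreover have "{Neg (p (t x) h)} \<in> P"
      using 3 x jk transpose_range[of x] by (intro earlier_mem) (auto simp: transpose_def)
    ultimately show ?thesis using partial_renaming_shift_subst
      by (intro reduct_implied_subsumed[where E' = "{Neg (p (t x) h)}"]) auto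
  qed
qed

private lemma cost_shift_subst_le:
  "cost (BPHP_blocks m n) (comp_subst \<tau> \<sigma>) \<le> cost (BPHP_blocks m n) \<tau>"
proof (rule cost_le_inj[OF finite_BPHP_blocks])
  let ?f = "\<lambda>b. case b of b1 x \<Rightarrow> b1 (t x) | _ \<Rightarrow> b"
  have "inj ?f"
  proof (rule injI)
    fix a b assume "?f a = ?f b"
    then show "a = b" by (cases a; cases b) (auto dest: transpose_eq_imp_eq)
  qed
  then show "inj_on ?f {b \<in> BPHP_blocks m n. comp_subst \<tau> \<sigma> b}" by (rule inj_on_subset) simp
  show "?f ` {b \<in> BPHP_blocks m n. comp_subst \<tau> \<sigma> b} \<subseteq> {b \<in> BPHP_blocks m n. \<tau> b}"
  proof
    fix c assume "c \<in> ?f ` {b \<in> BPHP_blocks m n. comp_subst \<tau> \<sigma> b}"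
    then obtain b where b: "b \<in> BPHP_blocks m n" "comp_subst \<tau> \<sigma> b" "c = ?f b" by blast
    then obtain x where x: "b = b1 x" "1 \<le> x" "x \<le> m"
      unfolding BPHP_blocks_eq by (auto simp: comp_subst_def shift_subst_def)
    then have "c = b1 (t x)" "\<tau> (b1 (t x))" using b by (auto simp: comp_subst_def shift_subst_def)
    moreover have "b1 (t x) \<in> BPHP_blocks m n"
      using transpose_range[OF x(2,3)] unfolding BPHP_blocks_eq by blast
    ultimately show "c \<in> {b \<in> BPHP_blocks m n. \<tau> b}" by blast
  qed
qed

lemma cost_SR_shift:
  assumes P: "P \<subseteq> BPHP m n \<union> {{Neg (b3 x y h)} | x y h. True}
      \<union> {strict_hole_clause x y h | x y h. collision m n x y h}
      \<union> {{Neg (p x h)} | x h. 1 \<le> h \<and> h \<le> j \<and> h < x \<and> x \<le> m}"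
  shows "cost_SR (BPHP_blocks m n) (BPHP m n \<union> P) {Neg (p k j)}"
proof (rule cost_SR_unitI)
  show "subst_lit \<sigma> (Neg (p k j)) = Const True" by (simp add: shift_subst_def)
  fix E assume E: "E \<in> BPHP m n \<union> P"
  with P have "E \<in> BPHP m n \<or> E \<in> {{Neg (b3 x y h)} | x y h. True}
    \<or> E \<in> {strict_hole_clause x y h | x y h. collision m n x y h}
    \<or> E \<in> {{Neg (p x h)} | x h. 1 \<le> h \<and> h \<le> j \<and> h < x \<and> x \<le> m}"
    by blast
  then consider (pigeon) x where "E = pigeon_clause n x" "1 \<le> x" "x \<le> m"
    | (hole) x y h where "E = hole_clause x y h \<or> E = strict_hole_clause x y h" "collision m n x y h"
    | (blocked) x y h where "E = {Neg (b3 x y h)}"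
    | (unit) x h where "E = {Neg (p x h)}" "1 \<le> h" "h \<le> j" "h < x" "x \<le> m"
    by (auto elim!: BPHP_memE)
  then show "reduct_implied \<sigma> (Neg (p k j)) (BPHP m n \<union> P) E"
  proof cases
    case pigeon
    then show ?thesis by (simp add: reduct_implied_shift_pigeon_clause)
  next
    case hole
    then show ?thesis using E by (blast intro: reduct_implied_shift_hole)
  next
    case blocked
    then show ?thesis by (intro reduct_implied_satisfied) (auto simp: shift_subst_def)
  next
    case unit
    then show ?thesis using E by (simp add: reduct_implied_shift_unit)
  qed
qed (rule cost_shift_subst_le)

end

definition matching_phase_clauses :: "nat \<Rightarrow> nat \<Rightarrow> bvar cnf" where
  "matching_phase_clauses m n = BPHP m n \<union> {strict_hole_clause x y h | x y h. collision m n x y h}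
     \<union> {{Neg v} | v. \<forall>x. v \<noteq> p x x} \<union> {{Pos (p x x)} | x. True}"

lemma matching_phase_clauses_cases:
  assumes "E \<in> matching_phase_clauses m n"
  obtains (pigeon) x where "E = pigeon_clause n x" "1 \<le> x" "x \<le> m"
    | (hole) x y h where "E = hole_clause x y h \<or> E = strict_hole_clause x y h" "collision m n x y h"
    | (neg) v where "E = {Neg v}" "\<forall>x. v \<noteq> p x x"
    | (diag) x where "E = {Pos (p x x)}"
  using assms unfolding matching_phase_clauses_def
proof (elim UnE)
  assume "E \<in> BPHP m n"
  then show thesis
  proof (rule BPHP_memE)
    fix i assume "E = pigeon_clause n i" "1 \<le> i" "i \<le> m"
    then show thesis by (rule that(1))
  next
    fix i k j assume "E = hole_clause i k j" "collision m n i k j"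
    then show thesis by (intro that(2)) auto
  qed
next
  assume "E \<in> {strict_hole_clause x y h | x y h. collision m n x y h}"
  then obtain x y h where "E = strict_hole_clause x y h" "collision m n x y h" by blast
  then show thesis by (intro that(2)) auto
next
  assume "E \<in> {{Neg v} | v. \<forall>x. v \<noteq> p x x}"
  then obtain v where "E = {Neg v}" "\<forall>x. v \<noteq> p x x" by blast
  then show thesis by (rule that(3))
next
  assume "E \<in> {{Pos (p x x)} | x. True}"
  then obtain x where "E = {Pos (p x x)}" by blast
  then show thesis by (rule that(4))
qed

text \<open>Pigeon \<open>j\<close> moves into hole \<open>j\<close> only and is unblocked; no other pigeon is in
  hole \<open>j\<close> once all units \<open>\<not>p x j\<close> are derived.\<close>
definition diagonal_subst :: "nat \<Rightarrow> bvar subst" where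
  "diagonal_subst j v = (case v of
      p x h \<Rightarrow> if x = j then Const (h = j) else Lit (Pos v)
    | b1 x \<Rightarrow> if x = j then Const False else Lit (Pos v)
    | b3 _ _ _ \<Rightarrow> Lit (Pos v))"

lemma diagonal_subst_other: "v \<noteq> b1 j \<Longrightarrow> (\<forall>h. v \<noteq> p j h) \<Longrightarrow> diagonal_subst j v = Lit (Pos v)"
  unfolding diagonal_subst_def by (cases v) auto

lemma partial_renaming_diagonal_subst: "partial_renaming (diagonal_subst j)"
  unfolding partial_renaming_def
proof (intro conjI allI impI)
  fix v show "(\<exists>b. diagonal_subst j v = Const b) \<or> (\<exists>y. diagonal_subst j v = Lit (Pos y))"
    unfolding diagonal_subst_def by (cases v) auto
next
  fix v v' y assume "diagonal_subst j v = Lit (Pos y)" "diagonal_subst j v' = Lit (Pos y)"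
  then show "v = v'" unfolding diagonal_subst_def by (cases v; cases v') (auto split: if_splits)
qed

lemma cost_diagonal_subst_le:
  "cost (BPHP_blocks m n) (comp_subst \<tau> (diagonal_subst j)) \<le> cost (BPHP_blocks m n) \<tau>"
proof (rule cost_mono[OF finite_BPHP_blocks])
  fix b assume "b \<in> BPHP_blocks m n" "comp_subst \<tau> (diagonal_subst j) b"
  then show "\<tau> b" by (cases b) (auto simp: comp_subst_def diagonal_subst_def split: if_splits)
qed

context
  fixes m n j :: nat and P :: "bvar cnf"
  assumes j: "1 \<le> j" "j \<le> n"
    and column: "\<And>x. 1 \<le> x \<Longrightarrow> x \<le> m \<Longrightarrow> x \<noteq> j \<Longrightarrow> {Neg (p x j)} \<in> P"
begin

private lemma reduct_implied_diagonal_hole: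
  assumes xyh: "collision m n x y h"
    and E: "E = hole_clause x y h \<or> E = strict_hole_clause x y h" "E \<in> BPHP m n \<union> P"
  shows "reduct_implied (diagonal_subst j) (Pos (p j j)) (BPHP m n \<union> P) E"
proof -
  have lits: "Neg (p x h) \<in> E" "Neg (p y h) \<in> E"
    using E(1) unfolding hole_clause_def strict_hole_clause_def by auto
  have taut: "\<not> tautology E" using E(1) by auto
  consider "x = j \<or> y = j" "h \<noteq> j" | "x = j \<or> y = j" "h = j" | "x \<noteq> j" "y \<noteq> j" by blast
  then show ?thesis
  proof cases
    case 1
    then show ?thesis
      using lits
      by (intro reduct_implied_satisfied[of "Neg (p j h)"]) (auto simp: diagonal_subst_def)
  next
    case 2
    define z where "z = (if x = j then y else x)"
    have z: "z \<noteq> j" "1 \<le> z" "z \<le> m" "Neg (p z j) \<in> E"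
      using 2 xyh lits unfolding z_def collision_def by auto
    have "(diagonal_subst j) (p z j) = Lit (Pos (p z j))" using z(1) by (simp add: diagonal_subst_def)
    with z(4) have "Neg (p z j) \<in> subst_clause (diagonal_subst j) E" by (rule Neg_mem_subst_clauseI)
    then show ?thesis using column[OF z(2,3,1)] z(1) taut partial_renaming_diagonal_subst
      by (intro reduct_implied_subsumed[where E' = "{Neg (p z j)}"]) auto
  next
    case 3
    then have "\<forall>v\<in>clause_vars E. (diagonal_subst j) v = Lit (Pos v)"
      using E(1) by (auto intro!: diagonal_subst_other)
    then show ?thesis using E(2) taut by (intro reduct_implied_fixed) (auto simp: diagonal_subst_def)
  qed
qed

lemma cost_SR_diagonal:
  assumes P: "P \<subseteq> matching_phase_clauses m n"
  shows "cost_SR (BPHP_blocks m n) (BPHP m n \<union> P) {Pos (p j j)}"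
proof (rule cost_SR_unitI)
  show c: "subst_lit (diagonal_subst j) (Pos (p j j)) = Const True" by (simp add: diagonal_subst_def)
  fix E assume E: "E \<in> BPHP m n \<union> P"
  then have "E \<in> matching_phase_clauses m n" using P unfolding matching_phase_clauses_def by blast
  then show "reduct_implied (diagonal_subst j) (Pos (p j j)) (BPHP m n \<union> P) E"
  proof (cases rule: matching_phase_clauses_cases)
    case (pigeon x)
    show ?thesis
    proof (cases "x = j")
      case True
      then have "Pos (p j j) \<in> E" using pigeon j unfolding pigeon_clause_def by auto
      then show ?thesis using c by (rule reduct_implied_satisfied)
    next
      case False
      then have "\<forall>v\<in>clause_vars E. (diagonal_subst j) v = Lit (Pos v)"
        using pigeon by (auto simp: clause_vars_pigeon_clause intro!: diagonal_subst_other)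
      then show ?thesis using pigeon E c by (intro reduct_implied_fixed) auto
    qed
  next
    case hole
    then show ?thesis using E by (blast intro: reduct_implied_diagonal_hole)
  next
    case (neg v)
    show ?thesis
    proof (cases "(diagonal_subst j) v = Lit (Pos v)")
      case True
      then show ?thesis using neg E c by (intro reduct_implied_fixed) auto
    next
      case False
      then have "(diagonal_subst j) v = Const False"
        using neg(2) by (auto simp: diagonal_subst_def split: bvar.splits)
      then show ?thesis using neg(1) by (intro reduct_implied_satisfied[of "Neg v"]) auto
    qed
  next
    case (diag x)
    show ?thesis
    proof (cases "x = j")
      case True
      then show ?thesis using diag c by (intro reduct_implied_satisfied) auto
    next
      case False
      then show ?thesis
        using diag E c by (intro reduct_implied_fixed) (auto simp: diagonal_subst_def)
    qed
  qed
qed (rule cost_diagonal_subst_le)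

end

lemma cost_SR_falsify:
  assumes j: "1 \<le> j" "j \<le> n"
    and w: "w = b1 j \<or> (\<exists>h. w = p j h \<and> h \<noteq> j)"
    and diag: "{Pos (p j j)} \<in> P"
    and P: "P \<subseteq> matching_phase_clauses m n"
  shows "cost_SR (BPHP_blocks m n) (BPHP m n \<union> P) {Neg w}"
proof (rule cost_SR_unitI)
  let ?\<sigma> = "falsify_subst w"
  show "subst_lit ?\<sigma> (Neg w) = Const True" by (simp add: falsify_subst_def)
  fix E assume E: "E \<in> BPHP m n \<union> P"
  then have "E \<in> matching_phase_clauses m n" using P unfolding matching_phase_clauses_def by blast
  then show "reduct_implied ?\<sigma> (Neg w) (BPHP m n \<union> P) E"
  proof (cases rule: matching_phase_clauses_cases)
    case (pigeon x)
    show ?thesis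
    proof (cases "x = j")
      case True
      have wj: "w \<noteq> p j j" using w by auto
      then have "?\<sigma> (p j j) = Lit (Pos (p j j))" by (simp add: falsify_subst_def)
      moreover have "Pos (p j j) \<in> E" using pigeon True j unfolding pigeon_clause_def by auto
      ultimately have "Pos (p j j) \<in> subst_clause ?\<sigma> E" by (intro Pos_mem_subst_clauseI)
      then show ?thesis using diag pigeon(1) wj
        by (intro reduct_implied_subsumed[where E' = "{Pos (p j j)}"])
           (auto simp: partial_renaming_falsify_subst)
    next
      case False
      then have "w \<notin> clause_vars E" using pigeon(1) w by (auto simp: clause_vars_pigeon_clause)
      then show ?thesis using E pigeon(1) by (intro reduct_implied_falsify) auto
    qed
  next
    case (hole x y h)
    have "clause_vars E \<subseteq> {v. Neg v \<in> E} \<union> {b3 x y h}"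
      using hole(1) by (auto simp: hole_clause_def strict_hole_clause_def clause_vars_def)
    then have "Neg w \<in> E \<or> w \<notin> clause_vars E" using w by blast
    then show ?thesis using E hole(1) by (intro reduct_implied_falsify) auto
  next
    case (neg v)
    then show ?thesis using E by (intro reduct_implied_falsify) auto
  next
    case (diag x)
    then have "w \<notin> clause_vars E" using w by auto
    then show ?thesis using E diag by (intro reduct_implied_falsify) auto
  qed
qed (rule cost_falsify_subst_le[OF finite_BPHP_blocks])

section \<open>The cost proof\<close>

definition collisions :: "nat \<Rightarrow> nat \<Rightarrow> (nat \<times> nat \<times> nat) list" where
  "collisions m n =
     filter (\<lambda>(i, k, j). i < k) (List.product [1..<m+1] (List.product [1..<m+1] [1..<n+1]))"

lemma set_collisions: "set (collisions m n) = {(i, k, j). collision m n i k j}"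
  unfolding collisions_def collision_def by auto

lemma length_collisions: "length (collisions m n) \<le> m * (m * n)"
proof -
  have "length (collisions m n) \<le>
      length (List.product [1..<m+1] (List.product [1..<m+1] [1..<n+1]))"
    unfolding collisions_def by (rule length_filter_le)
  then show ?thesis by (simp del: upt_Suc)
qed

definition unblocking_units :: "nat \<Rightarrow> nat \<Rightarrow> bvar clause list" where
  "unblocking_units m n = map (\<lambda>(i, k, j). {Neg (b3 i k j)}) (collisions m n)"

definition hole_clauses :: "nat \<Rightarrow> nat \<Rightarrow> bvar clause list" where
  "hole_clauses m n = map (\<lambda>(i, k, j). hole_clause i k j) (collisions m n)"

definition strict_hole_clauses :: "nat \<Rightarrow> nat \<Rightarrow> bvar clause list" where
  "strict_hole_clauses m n = map (\<lambda>(i, k, j). strict_hole_clause i k j) (collisions m n)"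

definition shifting_row :: "nat \<Rightarrow> nat \<Rightarrow> bvar clause list" where
  "shifting_row m j = map (\<lambda>k. {Neg (p k j)}) [j+1..<m+1]"

definition shifting_units :: "nat \<Rightarrow> nat \<Rightarrow> bvar clause list" where
  "shifting_units m n = concat (map (shifting_row m) [1..<n+1])"

definition matching_row :: "nat \<Rightarrow> nat \<Rightarrow> bvar clause list" where
  "matching_row n j =
     {Pos (p j j)} # map (\<lambda>w. {Neg w}) (b1 j # map (p j) (filter (\<lambda>h. h \<noteq> j) [1..<n+1]))"

definition matching_rows :: "nat \<Rightarrow> bvar clause list" where
  "matching_rows n = concat (map (matching_row n) [1..<n+1])"

text \<open>For a pigeon \<open>i > n\<close>, resolving its pigeon clause with the units \<open>\<not>p i 1, \<dots>, \<not>p i n\<close>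
  of the shifting phase leaves \<open>b1 i\<close>.\<close>
definition pigeon_suffix :: "nat \<Rightarrow> nat \<Rightarrow> nat \<Rightarrow> bvar clause" where
  "pigeon_suffix n i t = insert (Pos (b1 i)) {Pos (p i h) | h. t < h \<and> h \<le> n}"

definition suffix_chain :: "nat \<Rightarrow> nat \<Rightarrow> bvar clause list" where
  "suffix_chain n i = map (pigeon_suffix n i) [0..<n+1]"

definition suffix_chains :: "nat \<Rightarrow> nat \<Rightarrow> bvar clause list" where
  "suffix_chains m n = concat (map (suffix_chain n) [n+1..<m+1])"

definition BPHP_cost_derivation :: "nat \<Rightarrow> nat \<Rightarrow> bvar clause list" where
  "BPHP_cost_derivation m n =
     unblocking_units m n @ hole_clauses m n @ strict_hole_clauses m n @ shifting_units m n
     @ matching_rows n @ suffix_chains m n"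

lemma set_unblocking_units:
  "set (unblocking_units m n) = {{Neg (b3 i k j)} | i k j. collision m n i k j}"
  unfolding unblocking_units_def set_map set_collisions by auto

lemma set_hole_clauses: "set (hole_clauses m n) = {hole_clause i k j | i k j. collision m n i k j}"
  unfolding hole_clauses_def set_map set_collisions by auto

lemma set_strict_hole_clauses:
  "set (strict_hole_clauses m n) = {strict_hole_clause i k j | i k j. collision m n i k j}"
  unfolding strict_hole_clauses_def set_map set_collisions by auto

lemma set_shifting_row: "set (shifting_row m j) = {{Neg (p k j)} | k. j < k \<and> k \<le> m}"
  unfolding shifting_row_def by auto

lemma set_shifting_units:
  "set (shifting_units m n) = {{Neg (p k j)} | k j. 1 \<le> j \<and> j \<le> n \<and> j < k \<and> k \<le> m}"
  unfolding shifting_units_def by (auto simp: set_shifting_row)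

lemma set_matching_row:
  "set (matching_row n j) =
     {{Pos (p j j)}, {Neg (b1 j)}} \<union> {{Neg (p j h)} | h. 1 \<le> h \<and> h \<le> n \<and> h \<noteq> j}"
  unfolding matching_row_def by auto

lemma set_matching_row_subset: "set (matching_row n j) \<subseteq> matching_phase_clauses m n"
  unfolding set_matching_row matching_phase_clauses_def by auto

lemma pigeon_suffix_0: "pigeon_suffix n i 0 = pigeon_clause n i"
  unfolding pigeon_suffix_def pigeon_clause_def by auto

lemma pigeon_suffix_full: "pigeon_suffix n i n = {Pos (b1 i)}"
  unfolding pigeon_suffix_def by auto

lemma pigeon_suffix_resolvent:
  "1 \<le> t \<Longrightarrow>
   pigeon_suffix n i t = (pigeon_suffix n i (t - 1) - {Pos (p i t)}) \<union> ({Neg (p i t)} - {Neg (p i t)})"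
  unfolding pigeon_suffix_def by auto

context
  fixes m n :: nat
begin

private abbreviation "BV \<equiv> BPHP_blocks m n"
private abbreviation "\<Gamma> \<equiv> BPHP m n"

lemma derivation_unblocking_units: "derivation BV \<Gamma> (unblocking_units m n)"
proof (rule derivation_append_setI[where xs = "[]", simplified])
  fix ps D assume D: "D \<in> set (unblocking_units m n)" and ps: "set ps \<subseteq> set (unblocking_units m n)"
  from D obtain i k j where "D = {Neg (b3 i k j)}" "collision m n i k j"
    unfolding set_unblocking_units by blast
  with ps show "valid_step BV \<Gamma> ps D"
    by (auto simp: set_unblocking_units b3_mem_vars_BPHP intro!: valid_step_cost_SR cost_SR_unblock)
qed

lemma derivation_hole_clauses: "derivation BV \<Gamma> (unblocking_units m n @ hole_clauses m n)"
  using derivation_unblocking_units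
  by (rule derivation_append_setI)
     (auto simp: set_hole_clauses hole_clause_mem_BPHP intro: valid_step_axiom)

lemma derivation_strict_hole_clauses:
  "derivation BV \<Gamma> (unblocking_units m n @ hole_clauses m n @ strict_hole_clauses m n)"
proof -
  have "derivation BV \<Gamma> ((unblocking_units m n @ hole_clauses m n) @ strict_hole_clauses m n)"
  proof (rule derivation_append_setI[OF derivation_hole_clauses])
    fix ps D assume "D \<in> set (strict_hole_clauses m n)"
    then obtain i k j where D: "D = strict_hole_clause i k j" "collision m n i k j"
      unfolding set_strict_hole_clauses by blast
    show "valid_step BV \<Gamma> ((unblocking_units m n @ hole_clauses m n) @ ps) D"
    proof (rule valid_step_resolution[where x = "b3 i k j"])
      show "hole_clause i k j \<in> set ((unblocking_units m n @ hole_clauses m n) @ ps)"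
        using D(2) by (auto simp: set_hole_clauses)
      show "{Neg (b3 i k j)} \<in> set ((unblocking_units m n @ hole_clauses m n) @ ps)"
        using D(2) by (auto simp: set_unblocking_units)
      show "D = (hole_clause i k j - {Pos (b3 i k j)}) \<union> ({Neg (b3 i k j)} - {Neg (b3 i k j)})"
        unfolding D hole_clause_def strict_hole_clause_def by auto
    qed (auto simp: hole_clause_def)
  qed
  then show ?thesis by simp
qed

lemma derivation_shifting_units:
  "derivation BV \<Gamma>
     (unblocking_units m n @ hole_clauses m n @ strict_hole_clauses m n @ shifting_units m n)"
proof -
  let ?pre = "unblocking_units m n @ hole_clauses m n @ strict_hole_clauses m n"
  have "derivation BV \<Gamma> (?pre @ concat (map (shifting_row m) [1..<n+1]))"
  proof (rule derivation_append_concat_upt[OF derivation_strict_hole_clauses])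
    fix j assume j: "1 \<le> j" "j < n + 1"
      and IH: "derivation BV \<Gamma> (?pre @ concat (map (shifting_row m) [1..<j]))"
    let ?done = "?pre @ concat (map (shifting_row m) [1..<j])"
    have "derivation BV \<Gamma> (?done @ map (\<lambda>k. {Neg (p k j)}) [j+1..<m+1])"
    proof (rule derivation_append_map_upt[OF IH])
      fix k assume k: "j + 1 \<le> k" "k < m + 1"
      let ?P = "set (?done @ map (\<lambda>k. {Neg (p k j)}) [j+1..<k])"
      have "cost_SR BV (\<Gamma> \<union> ?P) {Neg (p k j)}"
      proof (rule cost_SR_shift)
        show "1 \<le> j" "j \<le> n" "j < k" "k \<le> m" using j k by auto
        show "strict_hole_clause x y h \<in> ?P" if "collision m n x y h" for x y h
          using that by (auto simp: set_strict_hole_clauses)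
        show "{Neg (p x h)} \<in> ?P" if "1 \<le> h" "h < j" "h < x" "x \<le> m" for x h
          using that by (auto simp: set_shifting_row)
        show "?P \<subseteq> BPHP m n \<union> {{Neg (b3 x y h)} | x y h. True}
            \<union> {strict_hole_clause x y h | x y h. collision m n x y h}
            \<union> {{Neg (p x h)} | x h. 1 \<le> h \<and> h \<le> j \<and> h < x \<and> x \<le> m}"
          using j k by (auto simp: set_unblocking_units set_hole_clauses set_strict_hole_clauses
              set_shifting_row hole_clause_mem_BPHP)
      qed
      then show "valid_step BV \<Gamma> (?done @ map (\<lambda>k. {Neg (p k j)}) [j+1..<k]) {Neg (p k j)}"
        using j k by (intro valid_step_cost_SR) (auto simp: p_mem_vars_BPHP)
    qed
    then show "derivation BV \<Gamma> (?pre @ concat (map (shifting_row m) [1..<j]) @ shifting_row m j)"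
      by (simp add: shifting_row_def)
  qed
  then show ?thesis by (simp add: shifting_units_def)
qed

lemma set_shifted_prefix_subset:
  "set (unblocking_units m n @ hole_clauses m n @ strict_hole_clauses m n @ shifting_units m n)
     \<subseteq> matching_phase_clauses m n"
  unfolding matching_phase_clauses_def
  by (auto simp: set_unblocking_units set_hole_clauses set_strict_hole_clauses set_shifting_units
      hole_clause_mem_BPHP)

lemma derivation_append_matching_row:
  assumes nm: "n < m" and j: "1 \<le> j" "j \<le> n"
    and xs: "derivation BV \<Gamma> xs" "set xs \<subseteq> matching_phase_clauses m n"
    and column: "\<And>x. 1 \<le> x \<Longrightarrow> x \<le> m \<Longrightarrow> x \<noteq> j \<Longrightarrow> {Neg (p x j)} \<in> set xs"
  shows "derivation BV \<Gamma> (xs @ matching_row n j)"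
proof -
  let ?ws = "b1 j # map (p j) (filter (\<lambda>h. h \<noteq> j) [1..<n+1])"
  have "derivation BV \<Gamma> (xs @ [{Pos (p j j)}])"
  proof (intro derivation_snocI[OF xs(1)] valid_step_cost_SR)
    show "cost_SR BV (\<Gamma> \<union> set xs) {Pos (p j j)}"
      using j column xs(2) by (rule cost_SR_diagonal)
    show "clause_vars {Pos (p j j)} \<subseteq> vars \<Gamma>" using j nm by (simp add: p_mem_vars_BPHP)
  qed
  then have "derivation BV \<Gamma> ((xs @ [{Pos (p j j)}]) @ map (\<lambda>w. {Neg w}) ?ws)"
  proof (rule derivation_append_setI)
    fix ps D
    assume D: "D \<in> set (map (\<lambda>w. {Neg w}) ?ws)" and ps: "set ps \<subseteq> set (map (\<lambda>w. {Neg w}) ?ws)"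
    from D obtain w where w: "D = {Neg w}" "w = b1 j \<or> (\<exists>h. w = p j h \<and> h \<noteq> j \<and> 1 \<le> h \<and> h \<le> n)"
      by auto
    have "set ((xs @ [{Pos (p j j)}]) @ ps) \<subseteq> matching_phase_clauses m n"
      using xs(2) ps set_matching_row_subset[of n j m] unfolding matching_row_def by auto
    then have "cost_SR BV (\<Gamma> \<union> set ((xs @ [{Pos (p j j)}]) @ ps)) {Neg w}"
      using j w(2) by (intro cost_SR_falsify[of j n]) auto
    moreover have "w \<in> vars \<Gamma>" using w(2) j nm by (auto simp: p_mem_vars_BPHP b1_mem_vars_BPHP)
    ultimately show "valid_step BV \<Gamma> ((xs @ [{Pos (p j j)}]) @ ps) D"
      unfolding w(1) by (intro valid_step_cost_SR) auto
  qed
  then show ?thesis by (simp add: matching_row_def)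
qed

lemma derivation_matching_rows:
  assumes nm: "n < m"
  shows "derivation BV \<Gamma> (unblocking_units m n @ hole_clauses m n @ strict_hole_clauses m n
    @ shifting_units m n @ matching_rows n)"
proof -
  let ?pre = "unblocking_units m n @ hole_clauses m n @ strict_hole_clauses m n @ shifting_units m n"
  have "derivation BV \<Gamma> (?pre @ concat (map (matching_row n) [1..<n+1]))"
  proof (rule derivation_append_concat_upt)
    show "derivation BV \<Gamma> ?pre" using derivation_shifting_units by simp
  next
    fix j assume j: "1 \<le> j" "j < n + 1"
      and IH: "derivation BV \<Gamma> (?pre @ concat (map (matching_row n) [1..<j]))"
    have "derivation BV \<Gamma> ((?pre @ concat (map (matching_row n) [1..<j])) @ matching_row n j)"
    proof (rule derivation_append_matching_row[OF nm _ _ IH])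
      show "1 \<le> j" "j \<le> n" using j by auto
      show "set (?pre @ concat (map (matching_row n) [1..<j])) \<subseteq> matching_phase_clauses m n"
        using set_shifted_prefix_subset set_matching_row_subset by fastforce
      show "{Neg (p x j)} \<in> set (?pre @ concat (map (matching_row n) [1..<j]))"
        if "1 \<le> x" "x \<le> m" "x \<noteq> j" for x
      proof (cases "j < x")
        case True
        then show ?thesis using that j by (auto simp: set_shifting_units)
      next
        case False
        then have "{Neg (p x j)} \<in> set (matching_row n x)" "x \<in> set [1..<j]"
          using that j by (auto simp: set_matching_row)
        then show ?thesis by auto
      qed
    qed
    then show "derivation BV \<Gamma> (?pre @ concat (map (matching_row n) [1..<j]) @ matching_row n j)"
      by simp
  qed
  then show ?thesis by (simp add: matching_rows_def)
qed

lemma derivation_append_suffix_chain: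
  assumes xs: "derivation BV \<Gamma> xs" and i: "1 \<le> i" "i \<le> m"
    and row: "\<And>t. 1 \<le> t \<Longrightarrow> t \<le> n \<Longrightarrow> {Neg (p i t)} \<in> set xs"
  shows "derivation BV \<Gamma> (xs @ suffix_chain n i)"
  unfolding suffix_chain_def
proof (rule derivation_append_map_upt[OF xs])
  fix t assume t: "0 \<le> t" "t < n + 1"
  show "valid_step BV \<Gamma> (xs @ map (pigeon_suffix n i) [0..<t]) (pigeon_suffix n i t)"
  proof (cases "t = 0")
    case True
    then show ?thesis using i
      by (auto simp: pigeon_suffix_0 intro!: valid_step_axiom pigeon_clause_mem_BPHP)
  next
    case False
    show ?thesis
    proof (rule valid_step_resolution[where x = "p i t"])
      show "pigeon_suffix n i (t - 1) \<in> set (xs @ map (pigeon_suffix n i) [0..<t])"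
        using False by auto
      show "{Neg (p i t)} \<in> set (xs @ map (pigeon_suffix n i) [0..<t])"
        using False t row by auto
      show "Pos (p i t) \<in> pigeon_suffix n i (t - 1)"
        using False t by (auto simp: pigeon_suffix_def)
      show "pigeon_suffix n i t =
          (pigeon_suffix n i (t - 1) - {Pos (p i t)}) \<union> ({Neg (p i t)} - {Neg (p i t)})"
        using False by (simp add: pigeon_suffix_resolvent)
    qed simp
  qed
qed

lemma derivation_BPHP_cost_derivation:
  assumes "n < m"
  shows "derivation BV \<Gamma> (BPHP_cost_derivation m n)"
proof -
  let ?pre = "unblocking_units m n @ hole_clauses m n @ strict_hole_clauses m n @ shifting_units m n
     @ matching_rows n"
  have "derivation BV \<Gamma> (?pre @ concat (map (suffix_chain n) [n+1..<m+1]))"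
  proof (rule derivation_append_concat_upt)
    show "derivation BV \<Gamma> ?pre" using derivation_matching_rows[OF assms] by simp
  next
    fix i assume i: "n + 1 \<le> i" "i < m + 1"
      and IH: "derivation BV \<Gamma> (?pre @ concat (map (suffix_chain n) [n+1..<i]))"
    have "{Neg (p i t)} \<in> set (?pre @ concat (map (suffix_chain n) [n+1..<i]))"
      if "1 \<le> t" "t \<le> n" for t
      using that i by (auto simp: set_shifting_units)
    with IH i show "derivation BV \<Gamma> (?pre @ concat (map (suffix_chain n) [n+1..<i]) @ suffix_chain n i)"
      using derivation_append_suffix_chain[of "?pre @ concat (map (suffix_chain n) [n+1..<i])" i]
      by simp
  qed
  then show ?thesis by (simp add: BPHP_cost_derivation_def suffix_chains_def)
qed

lemma cost_proof_BPHP_cost_derivation: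
  assumes "n < m"
  shows "cost_proof BV \<Gamma> (m - n) (BPHP_cost_derivation m n)"
  unfolding cost_proof_def
proof (intro conjI exI[where x = "b1 ` {n+1..m}"])
  show "derivation BV \<Gamma> (BPHP_cost_derivation m n)"
    using assms by (rule derivation_BPHP_cost_derivation)
  show "b1 ` {n+1..m} \<subseteq> BV" unfolding BPHP_blocks_eq by auto
  have "card (b1 ` {n+1..m}) = card {n+1..m}" by (rule card_image) (simp add: inj_on_def)
  then show "card (b1 ` {n+1..m}) = m - n" by simp
  show "\<forall>b\<in>b1 ` {n+1..m}. {Pos b} \<in> set (BPHP_cost_derivation m n)"
  proof
    fix b assume "b \<in> b1 ` {n+1..m}"
    then obtain i where i: "b = b1 i" "n < i" "i \<le> m" by auto
    have "pigeon_suffix n i n \<in> set (suffix_chain n i)" unfolding suffix_chain_def by simp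
    moreover have "i \<in> set [n+1..<m+1]" using i by (simp del: upt_Suc)
    ultimately have "pigeon_suffix n i n \<in> set (suffix_chains m n)"
      unfolding suffix_chains_def set_concat set_map by blast
    then show "{Pos b} \<in> set (BPHP_cost_derivation m n)"
      unfolding BPHP_cost_derivation_def pigeon_suffix_full i(1) by simp
  qed
  show "\<forall>b\<in>BV - b1 ` {n+1..m}. {Neg b} \<in> set (BPHP_cost_derivation m n)"
  proof
    fix b assume "b \<in> BV - b1 ` {n+1..m}"
    then consider i where "b = b1 i" "1 \<le> i" "i \<le> n"
      | i k j where "b = b3 i k j" "collision m n i k j"
      unfolding BPHP_blocks_eq by fastforce
    then show "{Neg b} \<in> set (BPHP_cost_derivation m n)"
    proof cases
      case 1
      then have "{Neg b} \<in> set (matching_row n i)" "i \<in> set [1..<n+1]"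
        by (simp_all add: set_matching_row del: upt_Suc)
      then show ?thesis
        unfolding BPHP_cost_derivation_def matching_rows_def set_append set_concat set_map by blast
    next
      case 2
      then show ?thesis unfolding BPHP_cost_derivation_def set_append set_unblocking_units by blast
    qed
  qed
qed

end

lemma length_concat_map_le:
  "(\<And>x. x \<in> set xs \<Longrightarrow> length (f x) \<le> c) \<Longrightarrow> length (concat (map f xs)) \<le> length xs * c"
  by (induction xs) (auto simp: add_mono)

lemma length_BPHP_cost_derivation:
  assumes "n < m"
  shows "length (BPHP_cost_derivation m n) \<le> 7 * (m + n) ^ 3"
proof -
  let ?s = "m + n"
  have s: "1 \<le> ?s" "m \<le> ?s" "n \<le> ?s" "n + 1 \<le> ?s" "m - n \<le> ?s" using assms by auto
  have sq_cube: "?s * ?s \<le> ?s ^ 3" using s(1) by (simp add: power3_eq_cube)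
  have "length (collisions m n) \<le> ?s ^ 3"
    using length_collisions[of m n] mult_le_mono[OF s(2) mult_le_mono[OF s(2,3)]]
    by (simp add: power3_eq_cube mult.assoc)
  moreover have "length (shifting_units m n) \<le> ?s ^ 3"
  proof -
    have "length (shifting_units m n) \<le> n * m"
      unfolding shifting_units_def using length_concat_map_le[of "[1..<n+1]" "shifting_row m" m]
      by (simp add: shifting_row_def del: upt_Suc)
    also have "\<dots> \<le> ?s * ?s" using s by (intro mult_le_mono) auto
    finally show ?thesis using sq_cube by linarith
  qed
  moreover have "length (matching_rows n) \<le> 2 * ?s ^ 3"
  proof -
    have "length (matching_row n j) \<le> n + 2" for j
      unfolding matching_row_def using length_filter_le[of "\<lambda>h. h \<noteq> j" "[1..<n+1]"]
      by (simp del: upt_Suc)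
    then have "length (matching_rows n) \<le> n * (n + 2)"
      unfolding matching_rows_def using length_concat_map_le[of "[1..<n+1]" "matching_row n" "n + 2"]
      by (simp del: upt_Suc)
    also have "\<dots> \<le> ?s * (2 * ?s)" using s by (intro mult_le_mono) auto
    finally show ?thesis using sq_cube by linarith
  qed
  moreover have "length (suffix_chains m n) \<le> ?s ^ 3"
  proof -
    have "length (suffix_chains m n) \<le> (m - n) * (n + 1)"
      unfolding suffix_chains_def using length_concat_map_le[of "[n+1..<m+1]" "suffix_chain n" "n + 1"]
      by (simp add: suffix_chain_def del: upt_Suc)
    also have "\<dots> \<le> ?s * ?s" using s by (intro mult_le_mono) auto
    finally show ?thesis using sq_cube by linarith
  qed
  ultimately show ?thesis
    unfolding BPHP_cost_derivation_def unblocking_units_def hole_clauses_def strict_hole_clauses_def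
    by simp
qed

theorem theorem6p3:
  shows "\<exists>c d :: nat. \<forall>m n :: nat. 1 \<le> n \<and> n < m \<longrightarrow>
           (\<exists>Ds. cost_proof (BPHP_blocks m n) (BPHP m n) (m - n) Ds \<and>
                 length Ds \<le> c * (m + n) ^ d)"
proof -
  have "\<forall>m n :: nat. 1 \<le> n \<and> n < m \<longrightarrow>
      (\<exists>Ds. cost_proof (BPHP_blocks m n) (BPHP m n) (m - n) Ds \<and> length Ds \<le> 7 * (m + n) ^ 3)"
    using cost_proof_BPHP_cost_derivation length_BPHP_cost_derivation by blast
  then show ?thesis by blast
qed

end
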